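(* For $\alpha\in\mathbb R\setminus\{0\}$ let $\phi_\alpha:\mathbb R\to\mathbb R$ be $\phi_\alpha(x)=x^\alpha$ for $x\ge0$ and $\phi_\alpha(x)=-(-x)^\alpha$ for $x<0$ (with $\phi_\alpha(0)=0$), and let $x+_{\phi_\alpha}y=\phi_\alpha^{-1}(\phi_\alpha(x)+\phi_\alpha(y))$. Let $P=\prod_{\alpha\in\mathbb R\setminus\{0\}}\mathbb R$ be the full direct product, with addition $(x_\alpha)+(y_\alpha)=(x_\alpha+_{\phi_\alpha}y_\alpha)$ and scalar multiplication $\lambda(x_\alpha)=(\lambda x_\alpha)$, $\lambda\in\mathbb R$. Then the quasi-kernel of $P$ is $Q(P)=\bigcup_{\alpha\in\mathbb R\setminus\{0\}}\mathbb R\mathbf e_\alpha$, where $\mathbf e_\alpha=(\delta_{\alpha,\beta})_{\beta}$, and consequently $P$ is not a near-vector space over $\mathbb R$.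
   Context: Here $\mathbb R$ is regarded as the scalar group $(\mathbb R,\cdot,1,0,-1)$. For an abelian group $V$ with an action of $(\mathbb R,\cdot)$ by endomorphisms, the quasi-kernel is $Q(V)=\{u:\forall a,b\in\mathbb R\ \exists\gamma\in\mathbb R,\ au+bu=\gamma u\}$. A near-vector space over $\mathbb R$ is such a $V$ in which $0,1,-1$ act as $0,\mathrm{id},-\mathrm{id}$, the action is free (for $u\ne0$, $au=bu\Rightarrow a=b$), and $Q(V)$ generates $V$ as an additive group. $\delta_{\alpha,\beta}$ is $1$ if $\alpha=\beta$ and $0$ otherwise. *)

theory Defs
  imports Complex_Main
begin

definition quasi_kernel ::
  "'v set \<Rightarrow> ('v \<Rightarrow> 'v \<Rightarrow> 'v) \<Rightarrow> (real \<Rightarrow> 'v \<Rightarrow> 'v) \<Rightarrow> 'v set" where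
  "quasi_kernel V add smult =
     {u \<in> V. \<forall>a b. \<exists>\<gamma>. add (smult a u) (smult b u) = smult \<gamma> u}"

inductive_set add_subgroup_gen ::
  "'v set \<Rightarrow> ('v \<Rightarrow> 'v \<Rightarrow> 'v) \<Rightarrow> 'v \<Rightarrow> 'v set \<Rightarrow> 'v set"
  for V add zero S where
  gen_zero: "zero \<in> add_subgroup_gen V add zero S"
| gen_base: "s \<in> S \<Longrightarrow> s \<in> add_subgroup_gen V add zero S"
| gen_add: "x \<in> add_subgroup_gen V add zero S \<Longrightarrow> y \<in> add_subgroup_gen V add zero S
     \<Longrightarrow> add x y \<in> add_subgroup_gen V add zero S"
| gen_neg: "x \<in> add_subgroup_gen V add zero S \<Longrightarrow> y \<in> V \<Longrightarrow> add x y = zero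
     \<Longrightarrow> y \<in> add_subgroup_gen V add zero S"

definition abelian_group_on :: "'v set \<Rightarrow> ('v \<Rightarrow> 'v \<Rightarrow> 'v) \<Rightarrow> 'v \<Rightarrow> bool" where
  "abelian_group_on V add zero \<longleftrightarrow>
     zero \<in> V \<and> (\<forall>x\<in>V. \<forall>y\<in>V. add x y \<in> V) \<and>
     (\<forall>x\<in>V. \<forall>y\<in>V. \<forall>z\<in>V. add (add x y) z = add x (add y z)) \<and>
     (\<forall>x\<in>V. \<forall>y\<in>V. add x y = add y x) \<and>
     (\<forall>x\<in>V. add zero x = x) \<and>
     (\<forall>x\<in>V. \<exists>y\<in>V. add x y = zero)"

definition near_vector_space ::
  "'v set \<Rightarrow> ('v \<Rightarrow> 'v \<Rightarrow> 'v) \<Rightarrow> 'v \<Rightarrow> (real \<Rightarrow> 'v \<Rightarrow> 'v) \<Rightarrow> bool" where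
  "near_vector_space V add zero smult \<longleftrightarrow>
     abelian_group_on V add zero \<and>
     (\<forall>a. \<forall>x\<in>V. smult a x \<in> V) \<and>
     (\<forall>a. \<forall>x\<in>V. \<forall>y\<in>V. smult a (add x y) = add (smult a x) (smult a y)) \<and>
     (\<forall>a b. \<forall>x\<in>V. smult (a * b) x = smult a (smult b x)) \<and>
     (\<forall>x\<in>V. smult 0 x = zero \<and> smult 1 x = x \<and> add x (smult (-1) x) = zero) \<and>
     (\<forall>u\<in>V. u \<noteq> zero \<longrightarrow> (\<forall>a b. smult a u = smult b u \<longrightarrow> a = b)) \<and>
     add_subgroup_gen V add zero (quasi_kernel V add smult) = V"

definition phi :: "real \<Rightarrow> real \<Rightarrow> real" where
  "phi \<alpha> x = (if x \<ge> 0 then x powr \<alpha> else - ((- x) powr \<alpha>))"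

text \<open>The product over the index set R - {0}, represented as functions real => real
  that vanish at the (excluded) index 0.\<close>
definition P_carrier :: "(real \<Rightarrow> real) set" where
  "P_carrier = {x. x 0 = 0}"

definition P_add :: "(real \<Rightarrow> real) \<Rightarrow> (real \<Rightarrow> real) \<Rightarrow> (real \<Rightarrow> real)" where
  "P_add x y = (\<lambda>\<alpha>. if \<alpha> = 0 then 0 else inv (phi \<alpha>) (phi \<alpha> (x \<alpha>) + phi \<alpha> (y \<alpha>)))"

definition P_zero :: "real \<Rightarrow> real" where
  "P_zero = (\<lambda>_. 0)"

definition P_smult :: "real \<Rightarrow> (real \<Rightarrow> real) \<Rightarrow> (real \<Rightarrow> real)" where
  "P_smult c x = (\<lambda>\<alpha>. c * x \<alpha>)"

definition unit_vec :: "real \<Rightarrow> real \<Rightarrow> real" where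
  "unit_vec \<alpha> = (\<lambda>\<beta>. if \<alpha> = \<beta> then 1 else 0)"

end

theory Submission
  imports Defs
begin

text \<open>Each \<open>\<phi>\<^sub>\<alpha>\<close> is multiplicative, so \<open>+\<^sub>\<phi>\<^sub>\<alpha>\<close> is homogeneous:
  \<open>c x +\<^sub>\<phi>\<^sub>\<alpha> c y = c (x +\<^sub>\<phi>\<^sub>\<alpha> y)\<close>. Hence every multiple of a unit vector lies in the
  quasi-kernel. Conversely, if \<open>u + u = \<gamma> u\<close> then \<open>\<gamma> = 2 powr (1/\<alpha>)\<close> at every coordinate
  \<open>\<alpha>\<close> where \<open>u\<close> does not vanish, and \<open>\<alpha> \<mapsto> 2 powr (1/\<alpha>)\<close> is injective, so \<open>u\<close> has at
  most one nonzero coordinate. The subgroup generated by the quasi-kernel therefore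
  consists of finitely supported vectors only and is not all of \<open>P\<close>.\<close>

lemma phi_zero [simp]: "phi a 0 = 0"
  by (simp add: phi_def)

lemma phi_inverse:
  assumes "a \<noteq> 0"
  shows "phi (1/a) (phi a x) = x"
proof (cases "x \<ge> 0")
  case True
  then show ?thesis using assms
    by (cases "x = 0") (auto simp: phi_def powr_powr)
next
  case False
  then have "(-x) powr a > 0" by simp
  then show ?thesis using False assms by (auto simp: phi_def powr_powr)
qed

lemma inv_phi:
  assumes "a \<noteq> 0"
  shows "inv (phi a) = phi (1/a)"
proof (rule ext, rule inv_f_eq)
  show "inj (phi a)"
    by (rule inj_on_inverseI[where g = "phi (1/a)"]) (simp add: phi_inverse[OF assms])
  show "phi a (phi (1/a) y) = y" for y
    using phi_inverse[of "1/a" y] assms by simp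
qed

lemma phi_mult: "phi a (x * y) = phi a x * phi a y"
proof -
  have "\<bar>x * y\<bar> powr a = \<bar>x\<bar> powr a * \<bar>y\<bar> powr a"
    by (simp add: abs_mult powr_mult)
  moreover have "phi a z = sgn z * \<bar>z\<bar> powr a" for z
    by (simp add: phi_def sgn_if)
  ultimately show ?thesis
    by (simp add: sgn_mult)
qed

lemma phi_add_homogeneous:
  assumes "a \<noteq> 0"
  shows "phi (1/a) (phi a (c * x) + phi a (c * y)) = c * phi (1/a) (phi a x + phi a y)"
proof -
  have "phi a (c * x) + phi a (c * y) = phi a c * (phi a x + phi a y)"
    by (simp add: phi_mult algebra_simps)
  then show ?thesis
    by (simp add: phi_mult phi_inverse[OF assms])
qed

lemma phi_add_one_one: "phi (1/a) (phi a 1 + phi a 1) = 2 powr (1/a)"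
  by (simp add: phi_def)

lemma P_add_apply:
  assumes "\<alpha> \<noteq> 0"
  shows "P_add x y \<alpha> = phi (1/\<alpha>) (phi \<alpha> (x \<alpha>) + phi \<alpha> (y \<alpha>))"
  using assms by (simp add: P_add_def inv_phi)

lemma P_add_zero_index [simp]: "P_add x y 0 = 0"
  by (simp add: P_add_def)

lemma P_add_apply_left_zero:
  assumes "\<alpha> \<noteq> 0" and "x \<alpha> = 0"
  shows "P_add x y \<alpha> = y \<alpha>"
  using assms by (simp add: P_add_apply phi_inverse)

lemma P_smult_unit_vec_in_quasi_kernel:
  assumes "\<alpha> \<noteq> 0"
  shows "P_smult c (unit_vec \<alpha>) \<in> quasi_kernel P_carrier P_add P_smult"
proof -
  let ?u = "P_smult c (unit_vec \<alpha>)"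
  have "P_add (P_smult a ?u) (P_smult b ?u) = P_smult (phi (1/\<alpha>) (phi \<alpha> a + phi \<alpha> b)) ?u"
    for a b
  proof
    fix \<beta>
    show "P_add (P_smult a ?u) (P_smult b ?u) \<beta> = P_smult (phi (1/\<alpha>) (phi \<alpha> a + phi \<alpha> b)) ?u \<beta>"
    proof (cases "\<beta> = \<alpha>")
      case True
      then show ?thesis
        using assms phi_add_homogeneous[OF assms, of c a b]
        by (simp add: P_add_apply P_smult_def unit_vec_def mult.commute)
    next
      case False
      then show ?thesis
        by (cases "\<beta> = 0") (auto simp: P_add_apply P_smult_def unit_vec_def)
    qed
  qed
  moreover have "?u \<in> P_carrier"
    using assms by (simp add: P_carrier_def P_smult_def unit_vec_def)
  ultimately show ?thesis
    unfolding quasi_kernel_def by blast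
qed

lemma quasi_kernel_P_support_singleton:
  assumes u: "u \<in> quasi_kernel P_carrier P_add P_smult"
    and "\<alpha> \<noteq> 0" "u \<alpha> \<noteq> 0" "\<beta> \<noteq> 0" "u \<beta> \<noteq> 0"
  shows "\<alpha> = \<beta>"
proof -
  have "P_smult 1 u = u"
    by (simp add: P_smult_def)
  moreover obtain \<gamma> where "P_add (P_smult 1 u) (P_smult 1 u) = P_smult \<gamma> u"
    using u unfolding quasi_kernel_def by blast
  ultimately have \<gamma>: "P_add u u = P_smult \<gamma> u"
    by simp
  have "2 powr (1/\<delta>) = \<gamma>" if "\<delta> \<noteq> 0" "u \<delta> \<noteq> 0" for \<delta>
  proof -
    have "u \<delta> * 2 powr (1/\<delta>) = P_add u u \<delta>"
      using phi_add_homogeneous[OF \<open>\<delta> \<noteq> 0\<close>, of "u \<delta>" 1 1] phi_add_one_one[of \<delta>]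
      by (simp add: P_add_apply[OF \<open>\<delta> \<noteq> 0\<close>])
    also have "\<dots> = u \<delta> * \<gamma>"
      by (simp add: \<gamma> P_smult_def mult.commute)
    finally show ?thesis
      using \<open>u \<delta> \<noteq> 0\<close> by simp
  qed
  then have "2 powr (1/\<alpha>) = 2 powr (1/\<beta>)"
    using assms by simp
  then show "\<alpha> = \<beta>"
    using powr_inj[of 2 "1/\<alpha>" "1/\<beta>"] by simp
qed

lemma quasi_kernel_P_imp_unit_multiple:
  assumes u: "u \<in> quasi_kernel P_carrier P_add P_smult"
  shows "\<exists>\<alpha> c. \<alpha> \<noteq> 0 \<and> u = P_smult c (unit_vec \<alpha>)"
proof -
  have "u 0 = 0"
    using u by (simp add: quasi_kernel_def P_carrier_def)
  show ?thesis
  proof (cases "\<exists>\<alpha>. \<alpha> \<noteq> 0 \<and> u \<alpha> \<noteq> 0")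
    case True
    then obtain \<alpha> where \<alpha>: "\<alpha> \<noteq> 0" "u \<alpha> \<noteq> 0" by blast
    have "u = P_smult (u \<alpha>) (unit_vec \<alpha>)"
    proof
      fix \<beta>
      show "u \<beta> = P_smult (u \<alpha>) (unit_vec \<alpha>) \<beta>"
        using quasi_kernel_P_support_singleton[OF u \<alpha>, of \<beta>] \<open>u 0 = 0\<close>
        by (cases "\<beta> = 0") (auto simp: P_smult_def unit_vec_def)
    qed
    then show ?thesis
      using \<alpha> by blast
  next
    case False
    have "u = P_smult 0 (unit_vec 1)"
    proof
      fix \<beta>
      show "u \<beta> = P_smult 0 (unit_vec 1) \<beta>"
        using False \<open>u 0 = 0\<close> by (cases "\<beta> = 0") (auto simp: P_smult_def)
    qed
    then show ?thesis
      by force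
  qed
qed

lemma quasi_kernel_P:
  "quasi_kernel P_carrier P_add P_smult =
     (\<Union>\<alpha>\<in>{\<alpha>::real. \<alpha> \<noteq> 0}. {P_smult c (unit_vec \<alpha>) | c. True})"
  using quasi_kernel_P_imp_unit_multiple P_smult_unit_vec_in_quasi_kernel by fast

lemma add_subgroup_gen_P_finite_support:
  assumes "x \<in> add_subgroup_gen P_carrier P_add P_zero (quasi_kernel P_carrier P_add P_smult)"
  shows "finite {\<alpha>. x \<alpha> \<noteq> 0}"
  using assms
proof induction
  case gen_zero
  then show ?case by (simp add: P_zero_def)
next
  case (gen_base s)
  then obtain \<alpha> c where "s = P_smult c (unit_vec \<alpha>)"
    using quasi_kernel_P_imp_unit_multiple by blast
  then have "{\<alpha>. s \<alpha> \<noteq> 0} \<subseteq> {\<alpha>}"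
    by (auto simp: P_smult_def unit_vec_def split: if_splits)
  then show ?case
    using finite_subset by blast
next
  case (gen_add x y)
  have "P_add x y \<alpha> = 0" if "x \<alpha> = 0" "y \<alpha> = 0" for \<alpha>
    using that by (cases "\<alpha> = 0") (simp_all add: P_add_apply)
  then have "{\<alpha>. P_add x y \<alpha> \<noteq> 0} \<subseteq> {\<alpha>. x \<alpha> \<noteq> 0} \<union> {\<alpha>. y \<alpha> \<noteq> 0}"
    by blast
  then show ?case
    using gen_add finite_subset by blast
next
  case (gen_neg x y)
  have "y \<alpha> = 0" if "x \<alpha> = 0" for \<alpha>
  proof (cases "\<alpha> = 0")
    case True
    then show ?thesis using \<open>y \<in> P_carrier\<close> by (simp add: P_carrier_def)
  next
    case False
    then have "y \<alpha> = P_add x y \<alpha>"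
      using that by (simp add: P_add_apply_left_zero)
    then show ?thesis
      using \<open>P_add x y = P_zero\<close> by (simp add: P_zero_def)
  qed
  then have "{\<alpha>. y \<alpha> \<noteq> 0} \<subseteq> {\<alpha>. x \<alpha> \<noteq> 0}"
    by blast
  then show ?case
    using gen_neg finite_subset by blast
qed

lemma add_subgroup_gen_quasi_kernel_P_neq:
  "add_subgroup_gen P_carrier P_add P_zero (quasi_kernel P_carrier P_add P_smult) \<noteq> P_carrier"
proof
  assume gen: "add_subgroup_gen P_carrier P_add P_zero (quasi_kernel P_carrier P_add P_smult)
    = P_carrier"
  define w :: "real \<Rightarrow> real" where "w = (\<lambda>\<alpha>. if \<alpha> = 0 then 0 else 1)"
  have "w \<in> P_carrier"
    by (simp add: w_def P_carrier_def)
  then have "finite {\<alpha>. w \<alpha> \<noteq> 0}"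
    using add_subgroup_gen_P_finite_support gen by blast
  moreover have "{\<alpha>. w \<alpha> \<noteq> 0} = - {0}"
    by (auto simp: w_def)
  ultimately show False
    by (simp add: infinite_UNIV_char_0)
qed

theorem mainTheorem12:
  shows "quasi_kernel P_carrier P_add P_smult =
           (\<Union>\<alpha>\<in>{\<alpha>::real. \<alpha> \<noteq> 0}. {P_smult c (unit_vec \<alpha>) | c. True})
         \<and> \<not> near_vector_space P_carrier P_add P_zero P_smult"
  using quasi_kernel_P add_subgroup_gen_quasi_kernel_P_neq
  by (simp add: near_vector_space_def)

end
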